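(* Let $(\mathcal{E},[\cdot,\cdot]_{\mathcal{E}})$ be a Leibniz algebra over a field $\mathbb{K}$ and $\omega:\mathcal{E}\otimes\mathcal{E}\to\mathbb{K}$ a bilinear map such that $\mathbb{K}\oplus\mathcal{E}$ with bracket $[(a,x),(b,y)]_\omega=(\omega(x,y),[x,y]_{\mathcal{E}})$ is a Leibniz algebra (a central extension of $\mathcal{E}$ by $\mathbb{K}$). Then $R^{Lei}:(\mathbb{K}\oplus\mathcal{E})^{\otimes2}\to(\mathbb{K}\oplus\mathcal{E})^{\otimes2}$, $R^{Lei}((a,x)\otimes(b,y))=(b,y)\otimes(a,x)+(1,0)\otimes(\omega(x,y),[x,y]_{\mathcal{E}})$, is a solution of the Yang-Baxter equation. Moreover, if $\omega_1,\omega_2$ are two such maps and the central extensions $(\mathbb{K}\oplus\mathcal{E},[\cdot,\cdot]_{\omega_1})$ and $(\mathbb{K}\oplus\mathcal{E},[\cdot,\cdot]_{\omega_2})$ are isomorphic via $\theta$, then the induced solutions $R^{Lei}_1,R^{Lei}_2$ satisfy $(\theta\otimes\theta)R^{Lei}_1=R^{Lei}_2(\theta\otimes\theta)$.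
   Context: A (right) Leibniz algebra is a vector space with bilinear bracket satisfying $[[x,y],z]=[[x,z],y]+[x,[y,z]]$. Isomorphism of central extensions: a Leibniz algebra homomorphism $\theta:(\mathbb{K}\oplus\mathcal{E},[\cdot,\cdot]_{\omega_1})\to(\mathbb{K}\oplus\mathcal{E},[\cdot,\cdot]_{\omega_2})$ with $\theta\circ i=i$ and $p\circ\theta=p$, where $i(a)=(a,0)$ and $p(a,x)=x$. A solution of the Yang-Baxter equation on $V$ is an invertible linear $R:V\otimes V\to V\otimes V$ with $(R\otimes\mathrm{Id})(\mathrm{Id}\otimes R)(R\otimes\mathrm{Id})=(\mathrm{Id}\otimes R)(R\otimes\mathrm{Id})(\mathrm{Id}\otimes R)$. *)

theory Defs
  imports Complex_Main "HOL-Library.Function_Algebras" "HOL-Library.Product_Plus"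
begin

definition bilinear_map ::
  "('k::field \<Rightarrow> 'a::ab_group_add \<Rightarrow> 'a) \<Rightarrow> ('k \<Rightarrow> 'b::ab_group_add \<Rightarrow> 'b)
   \<Rightarrow> ('k \<Rightarrow> 'c::ab_group_add \<Rightarrow> 'c) \<Rightarrow> ('a \<Rightarrow> 'b \<Rightarrow> 'c) \<Rightarrow> bool" where
  "bilinear_map s1 s2 s3 f \<longleftrightarrow>
     (\<forall>x. Vector_Spaces.linear s2 s3 (f x)) \<and> (\<forall>y. Vector_Spaces.linear s1 s3 (\<lambda>x. f x y))"

text \<open>A (right) Leibniz algebra: vector space with a bilinear bracket satisfying
  [[x,y],z] = [[x,z],y] + [x,[y,z]].\<close>
definition leibniz_algebra ::
  "('k::field \<Rightarrow> 'v::ab_group_add \<Rightarrow> 'v) \<Rightarrow> ('v \<Rightarrow> 'v \<Rightarrow> 'v) \<Rightarrow> bool" where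
  "leibniz_algebra sc br \<longleftrightarrow> vector_space sc \<and> bilinear_map sc sc sc br \<and>
     (\<forall>x y z. br (br x y) z = br (br x z) y + br x (br y z))"

definition leibniz_hom ::
  "('k::field \<Rightarrow> 'v::ab_group_add \<Rightarrow> 'v) \<Rightarrow> ('v \<Rightarrow> 'v \<Rightarrow> 'v)
   \<Rightarrow> ('k \<Rightarrow> 'w::ab_group_add \<Rightarrow> 'w) \<Rightarrow> ('w \<Rightarrow> 'w \<Rightarrow> 'w) \<Rightarrow> ('v \<Rightarrow> 'w) \<Rightarrow> bool" where
  "leibniz_hom s1 b1 s2 b2 f \<longleftrightarrow> Vector_Spaces.linear s1 s2 f \<and> (\<forall>x y. f (b1 x y) = b2 (f x) (f y))"

definition ce_scale :: "('k::field \<Rightarrow> 'e \<Rightarrow> 'e) \<Rightarrow> 'k \<Rightarrow> 'k \<times> 'e \<Rightarrow> 'k \<times> 'e" where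
  "ce_scale sc c v = (c * fst v, sc c (snd v))"

definition ce_bracket :: "('e \<Rightarrow> 'e \<Rightarrow> 'k) \<Rightarrow> ('e \<Rightarrow> 'e \<Rightarrow> 'e) \<Rightarrow> 'k \<times> 'e \<Rightarrow> 'k \<times> 'e \<Rightarrow> 'k \<times> 'e" where
  "ce_bracket \<omega> br u v = (\<omega> (snd u) (snd v), br (snd u) (snd v))"

text \<open>Elements of the free vector space on lists of vectors: finitely supported
  coefficient functions. A pure tensor x1 \<otimes> ... \<otimes> xn is represented by gen [x1,...,xn].\<close>
type_synonym ('v, 'k) free = "'v list \<Rightarrow> 'k"

definition fsupp :: "('v, 'k::zero) free \<Rightarrow> 'v list set" where
  "fsupp f = {l. f l \<noteq> 0}"

definition free_elt :: "nat \<Rightarrow> ('v, 'k::zero) free \<Rightarrow> bool" where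
  "free_elt n f \<longleftrightarrow> finite (fsupp f) \<and> (\<forall>l\<in>fsupp f. length l = n)"

definition gen :: "'v list \<Rightarrow> ('v, 'k::{zero,one}) free" where
  "gen xs = (\<lambda>l. if l = xs then 1 else 0)"

definition fscale :: "'k::times \<Rightarrow> ('v, 'k) free \<Rightarrow> ('v, 'k) free" where
  "fscale c f = (\<lambda>l. c * f l)"

definition tensor_rels :: "('k::field \<Rightarrow> 'v::ab_group_add \<Rightarrow> 'v) \<Rightarrow> nat \<Rightarrow> ('v, 'k) free set" where
  "tensor_rels sc n =
     {gen (p @ [x + y] @ q) - gen (p @ [x] @ q) - gen (p @ [y] @ q) | p x y q.
        length p + length q + 1 = n} \<union>
     {gen (p @ [sc c x] @ q) - fscale c (gen (p @ [x] @ q)) | p c x q.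
        length p + length q + 1 = n}"

definition tensor_null :: "('k::field \<Rightarrow> 'v::ab_group_add \<Rightarrow> 'v) \<Rightarrow> nat \<Rightarrow> ('v, 'k) free set" where
  "tensor_null sc n = module.span fscale (tensor_rels sc n)"

definition tensor_eq :: "('k::field \<Rightarrow> 'v::ab_group_add \<Rightarrow> 'v) \<Rightarrow> nat \<Rightarrow> ('v, 'k) free \<Rightarrow> ('v, 'k) free \<Rightarrow> bool" where
  "tensor_eq sc n u w \<longleftrightarrow> u - w \<in> tensor_null sc n"

definition lin_ext :: "('v list \<Rightarrow> ('v, 'k::comm_ring_1) free) \<Rightarrow> ('v, 'k) free \<Rightarrow> ('v, 'k) free" where
  "lin_ext F f = (\<lambda>m. \<Sum>l\<in>fsupp f. f l * F l m)"

text \<open>A map F given on pure tensors of degree n induces a well-defined linear endomorphism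
  of V^{\<otimes>n}: it sends degree-n generators to degree-n elements and respects the relations.\<close>
definition tensor_endo :: "('k::field \<Rightarrow> 'v::ab_group_add \<Rightarrow> 'v) \<Rightarrow> nat \<Rightarrow> ('v list \<Rightarrow> ('v, 'k) free) \<Rightarrow> bool" where
  "tensor_endo sc n F \<longleftrightarrow>
     (\<forall>l. length l = n \<longrightarrow> free_elt n (F l)) \<and>
     (\<forall>u\<in>tensor_null sc n. lin_ext F u \<in> tensor_null sc n)"

text \<open>R \<otimes> Id and Id \<otimes> R on V^{\<otimes>3}, given on pure tensors [x,y,z].\<close>
definition op12 :: "('v list \<Rightarrow> ('v, 'k::zero) free) \<Rightarrow> 'v list \<Rightarrow> ('v, 'k) free" where
  "op12 R l = (\<lambda>m. if length m = 3 \<and> m ! 2 = l ! 2 then R (take 2 l) (take 2 m) else 0)"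

definition op23 :: "('v list \<Rightarrow> ('v, 'k::zero) free) \<Rightarrow> 'v list \<Rightarrow> ('v, 'k) free" where
  "op23 R l = (\<lambda>m. if length m = 3 \<and> m ! 0 = l ! 0 then R (drop 1 l) (drop 1 m) else 0)"

definition tensor_map2 :: "('v \<Rightarrow> 'v) \<Rightarrow> 'v list \<Rightarrow> ('v, 'k::{zero,one}) free" where
  "tensor_map2 f l = gen (map f l)"

text \<open>Linear maps agree iff they agree on pure tensors, which span.\<close>
definition YBE_solution :: "('k::field \<Rightarrow> 'v::ab_group_add \<Rightarrow> 'v) \<Rightarrow> ('v list \<Rightarrow> ('v, 'k) free) \<Rightarrow> bool" where
  "YBE_solution sc R \<longleftrightarrow>
     tensor_endo sc 2 R \<and>
     (\<exists>S. tensor_endo sc 2 S \<and>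
        (\<forall>x y. tensor_eq sc 2 (lin_ext S (R [x, y])) (gen [x, y]) \<and>
               tensor_eq sc 2 (lin_ext R (S [x, y])) (gen [x, y]))) \<and>
     (\<forall>x y z. tensor_eq sc 3
        (lin_ext (op12 R) (lin_ext (op23 R) (op12 R [x, y, z])))
        (lin_ext (op23 R) (lin_ext (op12 R) (op23 R [x, y, z]))))"

definition R_Lei :: "('e \<Rightarrow> 'e \<Rightarrow> 'k::field) \<Rightarrow> ('e \<Rightarrow> 'e \<Rightarrow> 'e::ab_group_add)
    \<Rightarrow> ('k \<times> 'e) list \<Rightarrow> ('k \<times> 'e, 'k) free" where
  "R_Lei \<omega> br l =
     (if length l = 2
      then gen [l ! 1, l ! 0] + gen [(1, 0), ce_bracket \<omega> br (l ! 0) (l ! 1)]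
      else 0)"

end

theory Submission
  imports Defs
begin

text \<open>Let \<open>e = (1, 0)\<close>. The bracket of the central extension only sees the
  \<open>\<E>\<close>-components, so \<open>e\<close> is annihilated by the bracket on both sides, and this together
  with the Leibniz identity is all that is needed: for any Leibniz algebra \<open>V\<close> with such an
  element \<open>e\<close>, the map \<open>R(x \<otimes> y) = y \<otimes> x + e \<otimes> [x,y]\<close> is invertible with inverse
  \<open>x \<otimes> y \<mapsto> y \<otimes> x - [y,x] \<otimes> e\<close>, and expanding both sides of the braid relation on
  \<open>x \<otimes> y \<otimes> z\<close> everything cancels except
  \<open>e \<otimes> e \<otimes> ([[x,y],z] - [[x,z],y] - [x,[y,z]])\<close> and tensors with a zero factor.
  Compatibility with an isomorphism \<open>\<theta>\<close> of central extensions holds already on pure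
  tensors, because \<open>\<theta>\<close> preserves the bracket and fixes \<open>e\<close>.\<close>

lemma module_fscale: "module (fscale :: 'k::field \<Rightarrow> ('v, 'k) free \<Rightarrow> ('v, 'k) free)"
  by unfold_locales (auto simp: fscale_def algebra_simps)

lemma fscale_add [simp]: "fscale c (f + g) = fscale c f + fscale c (g :: ('v, 'k::field) free)"
  by (simp add: fscale_def fun_eq_iff algebra_simps)

lemma fscale_diff [simp]: "fscale c (f - g) = fscale c f - fscale c (g :: ('v, 'k::field) free)"
  by (simp add: fscale_def fun_eq_iff algebra_simps)

lemma fsupp_gen: "fsupp (gen l :: ('v, 'k::zero_neq_one) free) = {l}"
  by (auto simp: fsupp_def gen_def)

lemma finite_fsupp_gen [simp]: "finite (fsupp (gen l :: ('v, 'k::zero_neq_one) free))"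
  by (simp add: fsupp_gen)

lemma finite_fsupp_zero [simp]: "finite (fsupp (0 :: ('v, 'k::zero) free))"
  by (simp add: fsupp_def)

lemma finite_fsupp_add [simp]:
  "finite (fsupp f) \<Longrightarrow> finite (fsupp g) \<Longrightarrow> finite (fsupp (f + g :: ('v, 'k::ab_group_add) free))"
  by (rule finite_subset[of _ "fsupp f \<union> fsupp g"]) (auto simp: fsupp_def)

lemma finite_fsupp_diff [simp]:
  "finite (fsupp f) \<Longrightarrow> finite (fsupp g) \<Longrightarrow> finite (fsupp (f - g :: ('v, 'k::ab_group_add) free))"
  by (rule finite_subset[of _ "fsupp f \<union> fsupp g"]) (auto simp: fsupp_def)

lemma finite_fsupp_fscale [simp]:
  "finite (fsupp f) \<Longrightarrow> finite (fsupp (fscale c f :: ('v, 'k::field) free))"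
  by (rule finite_subset[of _ "fsupp f"]) (auto simp: fsupp_def fscale_def)

lemma free_elt_gen: "length l = n \<Longrightarrow> free_elt n (gen l :: ('v, 'k::zero_neq_one) free)"
  by (simp add: free_elt_def fsupp_gen)

lemma free_elt_add:
  assumes "free_elt n f" "free_elt n g"
  shows "free_elt n (f + g :: ('v, 'k::ab_group_add) free)"
proof -
  have "fsupp (f + g) \<subseteq> fsupp f \<union> fsupp g" by (auto simp: fsupp_def)
  with assms show ?thesis unfolding free_elt_def by (auto intro: finite_subset)
qed

lemma free_elt_diff:
  assumes "free_elt n f" "free_elt n g"
  shows "free_elt n (f - g :: ('v, 'k::ab_group_add) free)"
proof -
  have "fsupp (f - g) \<subseteq> fsupp f \<union> fsupp g" by (auto simp: fsupp_def)
  with assms show ?thesis unfolding free_elt_def by (auto intro: finite_subset)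
qed

lemma lin_ext_eq_sum:
  assumes "finite A" "fsupp f \<subseteq> A"
  shows "lin_ext F f = (\<lambda>m. \<Sum>l\<in>A. f l * F l m)"
proof
  fix m
  show "lin_ext F f m = (\<Sum>l\<in>A. f l * F l m)"
    unfolding lin_ext_def
    by (rule sum.mono_neutral_left) (use assms in \<open>auto simp: fsupp_def\<close>)
qed

lemma lin_ext_add [simp]:
  assumes "finite (fsupp f)" "finite (fsupp g)"
  shows "lin_ext F (f + g) = lin_ext F f + lin_ext F g"
proof -
  have "fsupp (f + g) \<subseteq> fsupp f \<union> fsupp g" by (auto simp: fsupp_def)
  with assms show ?thesis
    by (simp add: lin_ext_eq_sum[of "fsupp f \<union> fsupp g"] fun_eq_iff sum.distrib distrib_right)
qed

lemma lin_ext_diff [simp]: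
  assumes "finite (fsupp f)" "finite (fsupp g)"
  shows "lin_ext F (f - g) = lin_ext F f - lin_ext F g"
proof -
  have "fsupp (f - g) \<subseteq> fsupp f \<union> fsupp g" by (auto simp: fsupp_def)
  with assms show ?thesis
    by (simp add: lin_ext_eq_sum[of "fsupp f \<union> fsupp g"] fun_eq_iff sum_subtractf left_diff_distrib)
qed

lemma lin_ext_fscale [simp]:
  assumes "finite (fsupp f)"
  shows "lin_ext F (fscale c f) = fscale c (lin_ext F f)"
proof -
  have "fsupp (fscale c f) \<subseteq> fsupp f" by (auto simp: fsupp_def fscale_def)
  with assms show ?thesis
    by (simp add: lin_ext_eq_sum[of "fsupp f"] fun_eq_iff fscale_def sum_distrib_left mult.assoc)
qed

lemma lin_ext_zero [simp]: "lin_ext F 0 = 0"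
  by (simp add: lin_ext_def fsupp_def fun_eq_iff)

lemma lin_ext_gen [simp]: "lin_ext F (gen l :: ('v, 'k::field) free) = F l"
  unfolding lin_ext_def fsupp_gen by (simp add: gen_def)

lemma tensor_null_add: "u \<in> tensor_null sc n \<Longrightarrow> v \<in> tensor_null sc n \<Longrightarrow> u + v \<in> tensor_null sc n"
  unfolding tensor_null_def by (rule module.span_add[OF module_fscale])

lemma tensor_null_diff: "u \<in> tensor_null sc n \<Longrightarrow> v \<in> tensor_null sc n \<Longrightarrow> u - v \<in> tensor_null sc n"
  unfolding tensor_null_def by (rule module.span_diff[OF module_fscale])

lemma tensor_null_uminus: "u \<in> tensor_null sc n \<Longrightarrow> - u \<in> tensor_null sc n"
  unfolding tensor_null_def by (rule module.span_neg[OF module_fscale])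

lemma tensor_null_fscale: "u \<in> tensor_null sc n \<Longrightarrow> fscale c u \<in> tensor_null sc n"
  unfolding tensor_null_def by (rule module.span_scale[OF module_fscale])

lemma tensor_null_zero: "0 \<in> tensor_null sc n"
  unfolding tensor_null_def by (rule module.span_zero[OF module_fscale])

lemma tensor_null_gen_add:
  "length p + length q + 1 = n \<Longrightarrow>
   gen (p @ [x + y] @ q) - gen (p @ [x] @ q) - gen (p @ [y] @ q) \<in> tensor_null sc n"
  unfolding tensor_null_def tensor_rels_def
  by (rule module.span_base[OF module_fscale], rule UnI1) blast

lemma tensor_null_gen_scale:
  "length p + length q + 1 = n \<Longrightarrow>
   gen (p @ [sc c x] @ q) - fscale c (gen (p @ [x] @ q)) \<in> tensor_null sc n"
  unfolding tensor_null_def tensor_rels_def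
  by (rule module.span_base[OF module_fscale], rule UnI2) blast

lemma tensor_null_gen_zero: "length p + length q + 1 = n \<Longrightarrow> gen (p @ [0] @ q) \<in> tensor_null sc n"
  using tensor_null_uminus[OF tensor_null_gen_add[of p q n 0 0 sc]] by simp

lemma tensor_null_gen_zero2:
  "gen [a, 0] \<in> tensor_null sc 2" "gen [0, a] \<in> tensor_null sc 2"
  using tensor_null_gen_zero[of "[a]" "[]" 2 sc] tensor_null_gen_zero[of "[]" "[a]" 2 sc] by simp_all

lemma tensor_null_gen_zero3:
  "gen [0, a, b] \<in> tensor_null sc 3" "gen [a, 0, b] \<in> tensor_null sc 3"
  "gen [a, b, 0] \<in> tensor_null sc 3"
  using tensor_null_gen_zero[of "[]" "[a, b]" 3 sc] tensor_null_gen_zero[of "[a]" "[b]" 3 sc]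
    tensor_null_gen_zero[of "[a, b]" "[]" 3 sc]
  by simp_all

lemma tensor_eq_refl: "tensor_eq sc n u u"
  by (simp add: tensor_eq_def tensor_null_zero)

lemma tensor_endoI:
  assumes "\<And>l. length l = n \<Longrightarrow> free_elt n (F l)"
    and "\<And>u. u \<in> tensor_rels sc n \<Longrightarrow> lin_ext F u \<in> tensor_null sc n"
  shows "tensor_endo sc n F"
proof -
  let ?good = "{u. finite (fsupp u) \<and> lin_ext F u \<in> tensor_null sc n}"
  have "module.span fscale (tensor_rels sc n) \<subseteq> ?good"
  proof (rule module.span_minimal[OF module_fscale])
    show "tensor_rels sc n \<subseteq> ?good"
    proof
      fix u assume "u \<in> tensor_rels sc n"
      moreover from this have "finite (fsupp u)" by (auto simp: tensor_rels_def)
      ultimately show "u \<in> ?good" using assms(2) by blast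
    qed
    show "module.subspace fscale ?good"
      by (rule module.subspaceI[OF module_fscale])
        (auto intro: tensor_null_add tensor_null_fscale tensor_null_zero)
  qed
  with assms(1) show ?thesis unfolding tensor_endo_def tensor_null_def by blast
qed

definition tensor_linear :: "('k::field \<Rightarrow> 'v::ab_group_add \<Rightarrow> 'v) \<Rightarrow> nat \<Rightarrow> ('v \<Rightarrow> ('v, 'k) free) \<Rightarrow> bool" where
  "tensor_linear sc n g \<longleftrightarrow>
     (\<forall>x y. g (x + y) - g x - g y \<in> tensor_null sc n) \<and>
     (\<forall>c x. g (sc c x) - fscale c (g x) \<in> tensor_null sc n)"

lemma tensor_linear_add:
  assumes "tensor_linear sc n g" "tensor_linear sc n h"
  shows "tensor_linear sc n (\<lambda>x. g x + h x)"
proof -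
  have "g (x + y) + h (x + y) - (g x + h x) - (g y + h y) =
        (g (x + y) - g x - g y) + (h (x + y) - h x - h y)"
    "g (sc c x) + h (sc c x) - fscale c (g x + h x) =
        (g (sc c x) - fscale c (g x)) + (h (sc c x) - fscale c (h x))" for x y c
    by (simp_all add: algebra_simps)
  with assms show ?thesis unfolding tensor_linear_def by (simp only:) (blast intro: tensor_null_add)
qed

lemma tensor_linear_diff:
  assumes "tensor_linear sc n g" "tensor_linear sc n h"
  shows "tensor_linear sc n (\<lambda>x. g x - h x)"
proof -
  have "g (x + y) - h (x + y) - (g x - h x) - (g y - h y) =
        (g (x + y) - g x - g y) - (h (x + y) - h x - h y)"
    "g (sc c x) - h (sc c x) - fscale c (g x - h x) =
        (g (sc c x) - fscale c (g x)) - (h (sc c x) - fscale c (h x))" for x y c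
    by (simp_all add: algebra_simps)
  with assms show ?thesis unfolding tensor_linear_def by (simp only:) (blast intro: tensor_null_diff)
qed

lemma tensor_linear_gen:
  assumes "Vector_Spaces.linear sc sc h" "length p + length q + 1 = n"
  shows "tensor_linear sc n (\<lambda>x. gen (p @ [h x] @ q))"
proof -
  from assms(1) have "h (x + y) = h x + h y" "h (sc c x) = sc c (h x)" for x y c
    unfolding linear_iff_module_hom by (simp_all add: module_hom.add module_hom.scale)
  with tensor_null_gen_add[OF assms(2)] tensor_null_gen_scale[OF assms(2)] show ?thesis
    unfolding tensor_linear_def by auto
qed

lemma tensor_endo2I:
  assumes "\<And>x y. free_elt 2 (F [x, y])"
    and "\<And>w. tensor_linear sc 2 (\<lambda>x. F [w, x])"
    and "\<And>w. tensor_linear sc 2 (\<lambda>x. F [x, w])"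
  shows "tensor_endo sc 2 F"
proof (rule tensor_endoI)
  show "free_elt 2 (F l)" if "length l = 2" for l
    using that assms(1) by (auto simp: numeral_eq_Suc length_Suc_conv)
  fix u assume "u \<in> tensor_rels sc 2"
  then show "lin_ext F u \<in> tensor_null sc 2"
    using assms(2,3) unfolding tensor_rels_def tensor_linear_def
    by (auto simp: add_is_1 length_Suc_conv)
qed

lemma
  assumes "bilinear_map s1 s2 s3 f"
  shows bilinear_map_linear_left: "Vector_Spaces.linear s1 s3 (\<lambda>x. f x y)"
    and bilinear_map_linear_right: "Vector_Spaces.linear s2 s3 (f x)"
    and bilinear_map_zero_left: "f 0 y = 0"
    and bilinear_map_zero_right: "f x 0 = 0"
  using assms unfolding bilinear_map_def linear_iff_module_hom by (auto intro: module_hom.zero)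

definition leibniz_R :: "('v \<Rightarrow> 'v \<Rightarrow> 'v) \<Rightarrow> 'v \<Rightarrow> 'v list \<Rightarrow> ('v, 'k::field) free" where
  "leibniz_R br e l = (if length l = 2 then gen [l ! 1, l ! 0] + gen [e, br (l ! 0) (l ! 1)] else 0)"

lemma leibniz_R_pair [simp]: "leibniz_R br e [x, y] = gen [y, x] + gen [e, br x y]"
  by (simp add: leibniz_R_def)

lemma op12_leibniz_R [simp]:
  "op12 (leibniz_R br e) [x, y, z] = gen [y, x, z] + gen [e, br x y, z]"
proof
  fix m :: "'a list"
  show "op12 (leibniz_R br e) [x, y, z] m = (gen [y, x, z] + gen [e, br x y, z]) m"
  proof (cases "length m = 3")
    case True
    then obtain m0 m1 m2 where "m = [m0, m1, m2]"
      by (auto simp: numeral_eq_Suc length_Suc_conv)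
    then show ?thesis by (simp add: op12_def gen_def)
  qed (auto simp: op12_def gen_def)
qed

lemma op23_leibniz_R [simp]:
  "op23 (leibniz_R br e) [x, y, z] = gen [x, z, y] + gen [x, e, br y z]"
proof
  fix m :: "'a list"
  show "op23 (leibniz_R br e) [x, y, z] m = (gen [x, z, y] + gen [x, e, br y z]) m"
  proof (cases "length m = 3")
    case True
    then obtain m0 m1 m2 where "m = [m0, m1, m2]"
      by (auto simp: numeral_eq_Suc length_Suc_conv)
    then show ?thesis by (simp add: op23_def gen_def)
  qed (auto simp: op23_def gen_def)
qed

lemma tensor_endo_leibniz_R:
  assumes "vector_space sc" "bilinear_map sc sc sc br"
  shows "tensor_endo sc 2 (leibniz_R br e)"
proof (rule tensor_endo2I)
  note ident = vector_space.linear_ident[OF assms(1)]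
  show "free_elt 2 (leibniz_R br e [x, y])" for x y
    by (simp add: free_elt_add free_elt_gen)
  show "tensor_linear sc 2 (\<lambda>x. leibniz_R br e [w, x])" for w
    using tensor_linear_add[OF tensor_linear_gen[OF ident, of "[]" "[w]"]
        tensor_linear_gen[OF bilinear_map_linear_right[OF assms(2)], of "[e]" "[]"]]
    by simp
  show "tensor_linear sc 2 (\<lambda>x. leibniz_R br e [x, w])" for w
    using tensor_linear_add[OF tensor_linear_gen[OF ident, of "[w]" "[]"]
        tensor_linear_gen[OF bilinear_map_linear_left[OF assms(2)], of "[e]" "[]"]]
    by simp
qed

lemma leibniz_R_invertible:
  fixes sc :: "'k::field \<Rightarrow> 'v::ab_group_add \<Rightarrow> 'v"
  assumes "vector_space sc" "bilinear_map sc sc sc br" "\<And>x. br x e = 0"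
  shows "\<exists>S. tensor_endo sc 2 S \<and>
    (\<forall>x y. tensor_eq sc 2 (lin_ext S (leibniz_R br e [x, y])) (gen [x, y]) \<and>
           tensor_eq sc 2 (lin_ext (leibniz_R br e) (S [x, y])) (gen [x, y]))"
proof (intro exI conjI allI)
  define S :: "'v list \<Rightarrow> ('v, 'k) free" where
    "S l = (if length l = 2 then gen [l ! 1, l ! 0] - gen [br (l ! 1) (l ! 0), e] else 0)" for l
  have S_pair [simp]: "S [x, y] = gen [y, x] - gen [br y x, e]" for x y
    by (simp add: S_def)
  note ident = vector_space.linear_ident[OF assms(1)]
  show "tensor_endo sc 2 S"
  proof (rule tensor_endo2I)
    show "free_elt 2 (S [x, y])" for x y
      by (simp add: free_elt_diff free_elt_gen)
    show "tensor_linear sc 2 (\<lambda>x. S [w, x])" for w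
      using tensor_linear_diff[OF tensor_linear_gen[OF ident, of "[]" "[w]"]
          tensor_linear_gen[OF bilinear_map_linear_left[OF assms(2)], of "[]" "[e]"]]
      by simp
    show "tensor_linear sc 2 (\<lambda>x. S [x, w])" for w
      using tensor_linear_diff[OF tensor_linear_gen[OF ident, of "[w]" "[]"]
          tensor_linear_gen[OF bilinear_map_linear_right[OF assms(2)], of "[]" "[e]"]]
      by simp
  qed
  fix x y
  have "lin_ext S (leibniz_R br e [x, y]) - gen [x, y] = - gen [0, e]"
    using assms(3) by (simp add: fun_eq_iff)
  then show "tensor_eq sc 2 (lin_ext S (leibniz_R br e [x, y])) (gen [x, y])"
    unfolding tensor_eq_def by (simp add: tensor_null_uminus tensor_null_gen_zero2)
  have "lin_ext (leibniz_R br e) (S [x, y]) - gen [x, y] = - gen [e, 0]"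
    using assms(3) by (simp add: fun_eq_iff)
  then show "tensor_eq sc 2 (lin_ext (leibniz_R br e) (S [x, y])) (gen [x, y])"
    unfolding tensor_eq_def by (simp add: tensor_null_uminus tensor_null_gen_zero2)
qed

lemma leibniz_R_braid:
  fixes sc :: "'k::field \<Rightarrow> 'v::ab_group_add \<Rightarrow> 'v"
  assumes "leibniz_algebra sc br" "\<And>x. br e x = 0" "\<And>x. br x e = 0"
  shows "tensor_eq sc 3
    (lin_ext (op12 (leibniz_R br e)) (lin_ext (op23 (leibniz_R br e)) (op12 (leibniz_R br e) [x, y, z])))
    (lin_ext (op23 (leibniz_R br e)) (lin_ext (op12 (leibniz_R br e)) (op23 (leibniz_R br e) [x, y, z])))"
proof -
  have bilinear: "bilinear_map sc sc sc br"
    and leibniz: "br (br x y) z = br (br x z) y + br x (br y z)"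
    using assms(1) unfolding leibniz_algebra_def by blast+
  have expand: "lin_ext (op12 (leibniz_R br e)) (lin_ext (op23 (leibniz_R br e)) (op12 (leibniz_R br e) [x, y, z])) -
        lin_ext (op23 (leibniz_R br e)) (lin_ext (op12 (leibniz_R br e)) (op23 (leibniz_R br e) [x, y, z])) =
      (gen [e, e, br (br x y) z] - gen [e, e, br (br x z) y] - gen [e, e, br x (br y z)])
      + gen [e, 0, br x z] + gen [e, 0, br x y] + gen [e, 0, br (br x y) z]
      - gen [e, br y z, 0] - gen [e, e, 0]"
    by (simp only: op12_leibniz_R op23_leibniz_R lin_ext_add lin_ext_gen finite_fsupp_gen
        finite_fsupp_add assms(2,3) bilinear_map_zero_left[OF bilinear]
        bilinear_map_zero_right[OF bilinear])
      (simp add: fun_eq_iff algebra_simps)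
  have leibniz_null: "gen [e, e, br (br x y) z] - gen [e, e, br (br x z) y] - gen [e, e, br x (br y z)]
      \<in> tensor_null sc 3"
    using tensor_null_gen_add[of "[e, e]" "[]" 3 "br (br x z) y" "br x (br y z)" sc] leibniz by simp
  show ?thesis unfolding tensor_eq_def expand
    by (rule leibniz_null | rule tensor_null_diff tensor_null_add tensor_null_gen_zero3)+
qed

theorem YBE_solution_leibniz_R:
  fixes sc :: "'k::field \<Rightarrow> 'v::ab_group_add \<Rightarrow> 'v"
  assumes "leibniz_algebra sc br" "\<And>x. br e x = 0" "\<And>x. br x e = 0"
  shows "YBE_solution sc (leibniz_R br e)"
proof -
  have vs: "vector_space sc" and bilinear: "bilinear_map sc sc sc br"
    using assms(1) unfolding leibniz_algebra_def by blast+
  show ?thesis unfolding YBE_solution_def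
    using tensor_endo_leibniz_R[OF vs bilinear] leibniz_R_invertible[OF vs bilinear assms(3)]
      leibniz_R_braid[OF assms]
    by blast
qed

lemma leibniz_R_natural:
  assumes "\<And>x y. \<theta> (br x y) = br' (\<theta> x) (\<theta> y)"
  shows "lin_ext (tensor_map2 \<theta>) (leibniz_R br e [x, y] :: ('v, 'k::field) free) =
         lin_ext (leibniz_R br' (\<theta> e)) (tensor_map2 \<theta> [x, y])"
  by (simp only: tensor_map2_def list.map leibniz_R_pair lin_ext_add lin_ext_gen finite_fsupp_gen assms)

lemma R_Lei_eq_leibniz_R: "R_Lei \<omega> br = leibniz_R (ce_bracket \<omega> br) (1, 0)"
  by (simp add: fun_eq_iff R_Lei_def leibniz_R_def)

lemma
  assumes "leibniz_algebra (ce_scale sc) (ce_bracket \<omega> br)"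
  shows ce_bracket_center_left: "ce_bracket \<omega> br (a, 0) v = 0"
    and ce_bracket_center_right: "ce_bracket \<omega> br v (a, 0) = 0"
proof -
  have "bilinear_map (ce_scale sc) (ce_scale sc) (ce_scale sc) (ce_bracket \<omega> br)"
    using assms unfolding leibniz_algebra_def by blast
  from bilinear_map_zero_left[OF this] bilinear_map_zero_right[OF this]
  show "ce_bracket \<omega> br (a, 0) v = 0" "ce_bracket \<omega> br v (a, 0) = 0"
    by (simp_all add: ce_bracket_def)
qed

theorem theorem5p1:
  fixes sc :: "'k::field \<Rightarrow> 'e::ab_group_add \<Rightarrow> 'e"
    and br :: "'e \<Rightarrow> 'e \<Rightarrow> 'e"
  assumes E: "leibniz_algebra sc br"
  shows "(\<forall>\<omega>. bilinear_map sc sc (*) \<omega> \<and> leibniz_algebra (ce_scale sc) (ce_bracket \<omega> br)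
            \<longrightarrow> YBE_solution (ce_scale sc) (R_Lei \<omega> br))
       \<and> (\<forall>\<omega>1 \<omega>2 \<theta>.
            bilinear_map sc sc (*) \<omega>1 \<and> leibniz_algebra (ce_scale sc) (ce_bracket \<omega>1 br) \<and>
            bilinear_map sc sc (*) \<omega>2 \<and> leibniz_algebra (ce_scale sc) (ce_bracket \<omega>2 br) \<and>
            leibniz_hom (ce_scale sc) (ce_bracket \<omega>1 br) (ce_scale sc) (ce_bracket \<omega>2 br) \<theta> \<and>
            (\<forall>a. \<theta> (a, 0) = (a, 0)) \<and> (\<forall>v. snd (\<theta> v) = snd v)
            \<longrightarrow> (\<forall>x y. tensor_eq (ce_scale sc) 2
                    (lin_ext (tensor_map2 \<theta>) (R_Lei \<omega>1 br [x, y]))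
                    (lin_ext (R_Lei \<omega>2 br) (tensor_map2 \<theta> [x, y]))))"
proof -
  have "YBE_solution (ce_scale sc) (R_Lei \<omega> br)"
    if "leibniz_algebra (ce_scale sc) (ce_bracket \<omega> br)" for \<omega>
    unfolding R_Lei_eq_leibniz_R
    using YBE_solution_leibniz_R[OF that] ce_bracket_center_left[OF that] ce_bracket_center_right[OF that]
    by blast
  moreover have "tensor_eq (ce_scale sc) 2
      (lin_ext (tensor_map2 \<theta>) (R_Lei \<omega>1 br [x, y])) (lin_ext (R_Lei \<omega>2 br) (tensor_map2 \<theta> [x, y]))"
    if hom: "leibniz_hom (ce_scale sc) (ce_bracket \<omega>1 br) (ce_scale sc) (ce_bracket \<omega>2 br) \<theta>"
      and fixes_e: "\<theta> (1, 0) = (1, 0)" for \<omega>1 \<omega>2 \<theta> x y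
  proof -
    have "\<theta> (ce_bracket \<omega>1 br u v) = ce_bracket \<omega>2 br (\<theta> u) (\<theta> v)" for u v
      using hom unfolding leibniz_hom_def by blast
    from leibniz_R_natural[where br = "ce_bracket \<omega>1 br" and br' = "ce_bracket \<omega>2 br"
        and e = "(1, 0)", OF this] show ?thesis
      unfolding R_Lei_eq_leibniz_R fixes_e by (metis tensor_eq_refl)
  qed
  ultimately show ?thesis by blast
qed

end
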